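(* Let $d,e\in\mathbb{Z}^+$ with $e\in\{1,\dots,d-1\}$, let $B\subseteq\mathbb{R}^2$ and $D\subseteq B$. (i) If $\alpha_e(D)\ge0$, then there is $C\in\mathcal{C}_{\le e}$ with $\psi_e^{-1}(V_e(D))\subseteq C$. (ii) If $\beta_e(B,D)\ge -1$, then there is $C\in\mathcal{C}_{\le d-e}$ with $\psi_{d-e}^{-1}(W_e(B,D))\subseteq C$. (iii) If $|B|\le\binom{d+2}{2}-1$, then there is $C\in\mathcal{C}_{\le d}$ with $\psi_d^{-1}(V_d(B))\subseteq C$. (iv) If $|B|\le\binom{d+2}{2}-1$, then there are $C_1\in\mathcal{C}_{\le e}$, $C_2\in\mathcal{C}_{\le d-e}$, $C_3\in\mathcal{C}_{\le d}$ with $U_e(B,D)\subseteq C_1\cup C_2\cup C_3$.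
   Context: For $k\in\mathbb{Z}^+$, a curve of degree $k$ is the zero set in $\mathbb{R}^2$ of a polynomial in $\mathbb{R}[x,y]$ of degree exactly $k$; $\mathcal{C}_k$ is the family of such curves and $\mathcal{C}_{\le k}:=\bigcup_{j=1}^k\mathcal{C}_j$. For $k\in\mathbb{Z}^+$ let $I_k=\{(i,j)\in\mathbb{Z}_{\ge 0}^2: 1\le i+j\le k\}$ and $\psi_k:\mathbb{R}^2\to\mathbb{R}^{\binom{k+2}{2}-1}$, $\psi_k(a_1,a_2)=(a_1^ia_2^j)_{(i,j)\in I_k}$. A flat is an affine subspace; $\mathrm{Fl}(S)$ is the affine hull of $S$ ($\mathrm{Fl}(\emptyset)=\emptyset$, $\dim\emptyset=-1$). With $d$ fixed, for $e\in\{1,\dots,d-1\}$, $B\subseteq\mathbb{R}^2$, $D\subseteq B$: $V_e(D):=\mathrm{Fl}(\psi_e(D))\subseteq\mathbb{R}^{\binom{e+2}{2}-1}$; $W_e(B,D):=\mathrm{Fl}\big(\psi_{d-e}(B\setminus\psi_e^{-1}(V_e(D)))\big)\subseteq\mathbb{R}^{\binom{d-e+2}{2}-1}$; $\alpha_e(D):=\binom{e+2}{2}-2-\dim V_e(D)$; $\beta_e(B,D):=\binom{d-e+2}{2}-3-\dim W_e(B,D)$; and $U_e(B,D):=\psi_d^{-1}(V_d(B))$ if $\alpha_e(D)<0$; $U_e(B,D):=\psi_d^{-1}(V_d(B))\cup\psi_e^{-1}(V_e(D))$ if $\beta_e(B,D)<0\le\alpha_e(D)$; $U_e(B,D):=\psi_d^{-1}(V_d(B))\cup\psi_e^{-1}(V_e(D))\cup\psi_{d-e}^{-1}(W_e(B,D))$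 if $\alpha_e(D),\beta_e(B,D)\ge0$. Here $V_d(B):=\mathrm{Fl}(\psi_d(B))$. *)

theory Defs
  imports Complex_Main
begin

text \<open>Points of R^2 are pairs of reals. Bivariate real polynomials are represented by
coefficient functions c i j (coefficient of x^i y^j).\<close>

definition poly_deg_exactly :: "nat \<Rightarrow> (nat \<Rightarrow> nat \<Rightarrow> real) \<Rightarrow> bool" where
  "poly_deg_exactly k c \<longleftrightarrow> (\<forall>i j. k < i + j \<longrightarrow> c i j = 0) \<and> (\<exists>i j. i + j = k \<and> c i j \<noteq> 0)"

definition poly_eval :: "nat \<Rightarrow> (nat \<Rightarrow> nat \<Rightarrow> real) \<Rightarrow> real \<times> real \<Rightarrow> real" where
  "poly_eval k c p = (\<Sum>i\<le>k. \<Sum>j\<le>k - i. c i j * fst p ^ i * snd p ^ j)"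

definition curve :: "nat \<Rightarrow> (real \<times> real) set \<Rightarrow> bool" where
  "curve k C \<longleftrightarrow> (\<exists>c. poly_deg_exactly k c \<and> C = {p. poly_eval k c p = 0})"

definition curve_le :: "nat \<Rightarrow> (real \<times> real) set \<Rightarrow> bool" where
  "curve_le k C \<longleftrightarrow> (\<exists>j\<in>{1..k}. curve j C)"

text \<open>Veronese-type map psi_k : R^2 -> R^{binom(k+2,2)-1}; the target space is modelled as
functions on index pairs, supported on I_k = {(i,j). 1 <= i+j <= k}.\<close>
definition psi :: "nat \<Rightarrow> real \<times> real \<Rightarrow> (nat \<times> nat \<Rightarrow> real)" where
  "psi k a = (\<lambda>(i, j). if 1 \<le> i + j \<and> i + j \<le> k then fst a ^ i * snd a ^ j else 0)"

definition psi_inv :: "nat \<Rightarrow> (nat \<times> nat \<Rightarrow> real) set \<Rightarrow> (real \<times> real) set" where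
  "psi_inv k V = {a. psi k a \<in> V}"

definition Fl :: "(nat \<times> nat \<Rightarrow> real) set \<Rightarrow> (nat \<times> nat \<Rightarrow> real) set" where
  "Fl S = {v. \<exists>F u. finite F \<and> F \<subseteq> S \<and> sum u F = 1 \<and> v = (\<lambda>q. \<Sum>x\<in>F. u x * x q)}"

definition aff_indep_pts :: "(nat \<Rightarrow> (nat \<times> nat \<Rightarrow> real)) \<Rightarrow> nat \<Rightarrow> bool" where
  "aff_indep_pts f m \<longleftrightarrow>
     (\<forall>c. (\<Sum>i\<le>m. c i) = 0 \<and> (\<forall>q. (\<Sum>i\<le>m. c i * f i q) = 0) \<longrightarrow> (\<forall>i\<le>m. c i = 0))"

definition fl_dim :: "(nat \<times> nat \<Rightarrow> real) set \<Rightarrow> int" where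
  "fl_dim V = (if V = {} then -1
     else int (Max {m. \<exists>f. (\<forall>i\<le>m. f i \<in> V) \<and> aff_indep_pts f m}))"

definition V_e :: "nat \<Rightarrow> (real \<times> real) set \<Rightarrow> (nat \<times> nat \<Rightarrow> real) set" where
  "V_e e D = Fl (psi e ` D)"

definition W_e :: "nat \<Rightarrow> nat \<Rightarrow> (real \<times> real) set \<Rightarrow> (real \<times> real) set \<Rightarrow> (nat \<times> nat \<Rightarrow> real) set" where
  "W_e d e B D = Fl (psi (d - e) ` (B - psi_inv e (V_e e D)))"

definition alpha_e :: "nat \<Rightarrow> (real \<times> real) set \<Rightarrow> int" where
  "alpha_e e D = int ((e + 2) choose 2) - 2 - fl_dim (V_e e D)"

definition beta_e :: "nat \<Rightarrow> nat \<Rightarrow> (real \<times> real) set \<Rightarrow> (real \<times> real) set \<Rightarrow> int" where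
  "beta_e d e B D = int ((d - e + 2) choose 2) - 3 - fl_dim (W_e d e B D)"

definition U_e :: "nat \<Rightarrow> nat \<Rightarrow> (real \<times> real) set \<Rightarrow> (real \<times> real) set \<Rightarrow> (real \<times> real) set" where
  "U_e d e B D =
     (if alpha_e e D < 0 then psi_inv d (V_e d B)
      else if beta_e d e B D < 0 then psi_inv d (V_e d B) \<union> psi_inv e (V_e e D)
      else psi_inv d (V_e d B) \<union> psi_inv e (V_e e D) \<union> psi_inv (d - e) (W_e d e B D))"

end

theory Submission
  imports Defs "HOL-Library.Function_Algebras"
begin

text \<open>Lift a point a to its full monomial vector veronese k a = (a_1^i a_2^j), indexed by
T_k = {(i,j). i + j <= k}: this is psi k a with the constant monomial adjoined, which turns affine
conditions on psi k a into linear ones. Affine independence of points of psi_k(S) is linear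
independence of their lifts in this space of dimension binom(k+2,2). Hence, if Fl(psi_k(S)) has
dimension at most binom(k+2,2) - 2, or if |S| < binom(k+2,2), the lifts of S do not span, and a
nonzero linear functional annihilating them is a polynomial of degree at most k vanishing on S.
Being affine in psi_k, it vanishes on all of psi_k^{-1}(Fl(psi_k(S))), and it is non-constant as
soon as S is non-empty, so its zero set is a curve of degree at most k. Part (iv) covers each
piece of U_e by the curves of (i)-(iii), or by an arbitrary curve if the piece is absent.\<close>

type_synonym vec = "nat \<times> nat \<Rightarrow> real"

definition scale_vec :: "real \<Rightarrow> vec \<Rightarrow> vec" where
  "scale_vec r v = (\<lambda>q. r * v q)"

lemma scale_vec_apply [simp]: "scale_vec r v q = r * v q"
  by (simp add: scale_vec_def)

interpretation Vec: vector_space_pair scale_vec "(*) :: real \<Rightarrow> real \<Rightarrow> real"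
  by unfold_locales (auto simp: scale_vec_def fun_eq_iff algebra_simps)

lemma sum_fun_apply: "(\<Sum>x\<in>A. f x) q = (\<Sum>x\<in>A. f x q)" for f :: "'a \<Rightarrow> vec"
  by (induct A rule: infinite_finite_induct) auto

subsection \<open>Monomial exponents and the coordinate space\<close>

definition monomial_exps :: "nat \<Rightarrow> (nat \<times> nat) set" where
  "monomial_exps k = {(i, j). i + j \<le> k}"

lemma monomial_exps_Sigma: "monomial_exps k = Sigma {..k} (\<lambda>i. {..k - i})"
  by (auto simp: monomial_exps_def)

lemma finite_monomial_exps [simp]: "finite (monomial_exps k)"
  by (simp add: monomial_exps_Sigma)

lemma zero_in_monomial_exps [simp]: "(0, 0) \<in> monomial_exps k"
  by (simp add: monomial_exps_def)

lemma card_monomial_exps: "card (monomial_exps k) = (k + 2) choose 2"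
proof (induction k)
  case 0
  have "monomial_exps 0 = {(0, 0)}" by (auto simp: monomial_exps_def)
  then show ?case by (simp add: numeral_2_eq_2)
next
  case (Suc k)
  let ?top = "(\<lambda>i. (i, Suc k - i)) ` {..Suc k}"
  have "monomial_exps (Suc k) = monomial_exps k \<union> ?top"
    by (auto simp: monomial_exps_def image_iff)
  moreover have "monomial_exps k \<inter> ?top = {}"
    by (auto simp: monomial_exps_def)
  moreover have "card ?top = Suc k + 1"
    by (subst card_image) (auto simp: inj_on_def)
  ultimately have "card (monomial_exps (Suc k)) = card (monomial_exps k) + (Suc k + 1)"
    by (simp add: card_Un_disjoint)
  with Suc.IH show ?case by (simp add: numeral_2_eq_2)
qed

lemma card_monomial_exps_pos: "0 < card (monomial_exps k)"
  using zero_in_monomial_exps finite_monomial_exps card_gt_0_iff by blast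

definition unit_vec :: "nat \<times> nat \<Rightarrow> vec" where
  "unit_vec q = (\<lambda>p. if p = q then 1 else 0)"

definition coord_space :: "nat \<Rightarrow> vec set" where
  "coord_space k = {v. \<forall>p. p \<notin> monomial_exps k \<longrightarrow> v p = 0}"

lemma unit_vec_in_coord_space: "q \<in> monomial_exps k \<Longrightarrow> unit_vec q \<in> coord_space k"
  by (auto simp: coord_space_def unit_vec_def)

lemma add_in_coord_space: "v \<in> coord_space k \<Longrightarrow> w \<in> coord_space k \<Longrightarrow> v + w \<in> coord_space k"
  by (simp add: coord_space_def)

lemma inj_unit_vec: "inj unit_vec"
  by (auto simp: inj_def unit_vec_def fun_eq_iff)

lemma card_unit_vecs: "card (unit_vec ` Q) = card Q"
  by (rule card_image) (meson inj_unit_vec inj_on_subset subset_UNIV)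

lemma independent_unit_vecs:
  assumes "finite Q"
  shows "Vec.vs1.independent (unit_vec ` Q)"
proof
  assume "Vec.vs1.dependent (unit_vec ` Q)"
  then obtain u q0 where "q0 \<in> Q" "u (unit_vec q0) \<noteq> 0"
    and comb: "(\<Sum>v\<in>unit_vec ` Q. scale_vec (u v) v) = 0"
    using assms by (auto simp: Vec.vs1.dependent_finite)
  have "0 = (\<Sum>v\<in>unit_vec ` Q. scale_vec (u v) v) q0"
    using comb by simp
  also have "\<dots> = (\<Sum>q\<in>Q. u (unit_vec q) * unit_vec q q0)"
    by (simp add: sum_fun_apply sum.reindex inj_on_subset[OF inj_unit_vec])
  also have "\<dots> = u (unit_vec q0)"
    using \<open>q0 \<in> Q\<close> assms by (simp add: unit_vec_def if_distrib sum.delta' cong: if_cong)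
  finally show False
    using \<open>u (unit_vec q0) \<noteq> 0\<close> by simp
qed

lemma coord_space_eq_sum:
  assumes "v \<in> coord_space k"
  shows "v = (\<Sum>q\<in>monomial_exps k. scale_vec (v q) (unit_vec q))"
proof
  fix p
  have "(\<Sum>q\<in>monomial_exps k. scale_vec (v q) (unit_vec q)) p
      = (\<Sum>q\<in>monomial_exps k. if q = p then v p else 0)"
    unfolding sum_fun_apply by (rule sum.cong) (auto simp: unit_vec_def)
  also have "\<dots> = v p"
    using assms unfolding coord_space_def by (cases p) (auto simp: sum.delta)
  finally show "v p = (\<Sum>q\<in>monomial_exps k. scale_vec (v q) (unit_vec q)) p" by simp
qed

lemma coord_space_subset_span: "coord_space k \<subseteq> Vec.vs1.span (unit_vec ` monomial_exps k)"
proof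
  fix v assume "v \<in> coord_space k"
  have "(\<Sum>q\<in>monomial_exps k. scale_vec (v q) (unit_vec q)) \<in> Vec.vs1.span (unit_vec ` monomial_exps k)"
    by (intro Vec.vs1.span_sum Vec.vs1.span_scale Vec.vs1.span_base) auto
  with coord_space_eq_sum[OF \<open>v \<in> coord_space k\<close>]
  show "v \<in> Vec.vs1.span (unit_vec ` monomial_exps k)" by simp
qed

lemma annihilator_exists:
  assumes "X \<subseteq> coord_space k" and "\<not> unit_vec ` monomial_exps k \<subseteq> Vec.vs1.span X"
  obtains c q0 where "\<And>x. x \<in> X \<Longrightarrow> (\<Sum>q\<in>monomial_exps k. c q * x q) = 0"
    and "q0 \<in> monomial_exps k" and "c q0 \<noteq> 0"
proof -
  obtain q0 where q0: "q0 \<in> monomial_exps k" "unit_vec q0 \<notin> Vec.vs1.span X"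
    using assms(2) by blast
  obtain B where B: "B \<subseteq> X" "Vec.vs1.independent B" "X \<subseteq> Vec.vs1.span B"
    using Vec.vs1.maximal_independent_subset[of X] by blast
  have q0_B: "unit_vec q0 \<notin> Vec.vs1.span B"
    using q0(2) Vec.vs1.span_mono[OF B(1)] by blast
  obtain g where g: "Vector_Spaces.linear scale_vec (*) g"
    and g_basis: "\<forall>x\<in>insert (unit_vec q0) B. g x = (if x = unit_vec q0 then 1 else 0)"
    using Vec.linear_independent_extend[OF Vec.vs1.independent_insertI[OF q0_B B(2)],
        of "\<lambda>x. if x = unit_vec q0 then 1 else 0"]
    by blast
  have "g x = 0" if "x \<in> B" for x
    using g_basis that q0_B Vec.vs1.span_base by fastforce
  then have g_X: "g x = 0" if "x \<in> X" for x
    using Vec.linear_eq_0_on_span[OF g] B(3) that by blast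
  define c where "c q = g (unit_vec q)" for q
  show thesis
  proof
    fix x assume "x \<in> X"
    have "g x = g (\<Sum>q\<in>monomial_exps k. scale_vec (x q) (unit_vec q))"
      using coord_space_eq_sum \<open>x \<in> X\<close> assms(1) by auto
    also have "\<dots> = (\<Sum>q\<in>monomial_exps k. c q * x q)"
      by (simp add: Vec.linear_sum[OF g] Vec.linear_scale[OF g] c_def mult.commute)
    finally show "(\<Sum>q\<in>monomial_exps k. c q * x q) = 0"
      using g_X[OF \<open>x \<in> X\<close>] by simp
  next
    show "q0 \<in> monomial_exps k" by (fact q0(1))
    show "c q0 \<noteq> 0" using g_basis by (simp add: c_def)
  qed
qed

lemma Fl_empty [simp]: "Fl {} = {}"
  by (auto simp: Fl_def)

lemma subset_Fl: "S \<subseteq> Fl S"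
proof
  fix x assume "x \<in> S"
  then show "x \<in> Fl S"
    unfolding Fl_def by (intro CollectI exI[of _ "{x}"] exI[of _ "\<lambda>_. 1"]) simp
qed

lemma Fl_linear_equation:
  assumes "v \<in> Fl S" and "\<And>x. x \<in> S \<Longrightarrow> (\<Sum>q\<in>Q. c q * x q) = r"
  shows "(\<Sum>q\<in>Q. c q * v q) = r"
proof -
  obtain F u where F: "F \<subseteq> S" "sum u F = 1" and v: "v = (\<lambda>q. \<Sum>x\<in>F. u x * x q)"
    using assms(1) unfolding Fl_def by blast
  have "(\<Sum>q\<in>Q. c q * v q) = (\<Sum>q\<in>Q. \<Sum>x\<in>F. u x * (c q * x q))"
    unfolding v sum_distrib_left by (intro sum.cong refl) (simp only: mult.left_commute)
  also have "\<dots> = (\<Sum>x\<in>F. u x * (\<Sum>q\<in>Q. c q * x q))"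
    by (subst sum.swap) (simp add: sum_distrib_left)
  also have "\<dots> = (\<Sum>x\<in>F. u x * r)"
    using F(1) assms(2) by (intro sum.cong) auto
  also have "\<dots> = r"
    using F(2) by (simp add: sum_distrib_right[symmetric])
  finally show ?thesis .
qed

lemma Fl_coordinate_equation:
  assumes "v \<in> Fl S" and "\<And>x. x \<in> S \<Longrightarrow> x p = r"
  shows "v p = r"
  using Fl_linear_equation[where Q = "{p}" and c = "\<lambda>_. 1"] assms by simp

subsection \<open>The monomial lift\<close>

lemma psi_outside_monomial_exps: "p \<notin> monomial_exps k \<Longrightarrow> psi k a p = 0"
  by (cases p) (auto simp: psi_def monomial_exps_def)

lemma psi_zero_exp [simp]: "psi k a (0, 0) = 0"
  by (simp add: psi_def)

lemma Fl_psi_in_coord_space: "v \<in> Fl (psi k ` S) \<Longrightarrow> v \<in> coord_space k"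
  unfolding coord_space_def
  by (auto elim!: Fl_coordinate_equation simp: psi_outside_monomial_exps)

lemma Fl_psi_zero_exp: "v \<in> Fl (psi k ` S) \<Longrightarrow> v (0, 0) = 0"
  by (erule Fl_coordinate_equation) auto

definition veronese :: "nat \<Rightarrow> real \<times> real \<Rightarrow> vec" where
  "veronese k a = psi k a + unit_vec (0, 0)"

lemma veronese_apply:
  "q \<in> monomial_exps k \<Longrightarrow> veronese k a q = fst a ^ fst q * snd a ^ snd q"
  by (cases q) (auto simp: veronese_def psi_def unit_vec_def monomial_exps_def)

lemma veronese_in_coord_space: "veronese k a \<in> coord_space k"
  unfolding veronese_def
  by (intro add_in_coord_space unit_vec_in_coord_space zero_in_monomial_exps)
    (simp add: coord_space_def psi_outside_monomial_exps)

lemma sum_veronese: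
  "(\<Sum>q\<in>monomial_exps k. c q * veronese k a q)
     = (\<Sum>q\<in>monomial_exps k. c q * psi k a q) + c (0, 0)"
proof -
  have "(\<Sum>q\<in>monomial_exps k. c q * unit_vec (0, 0) q) = c (0, 0)"
    by (simp add: unit_vec_def if_distrib cong: if_cong)
  then show ?thesis
    by (simp add: veronese_def distrib_left sum.distrib)
qed

lemma poly_eval_eq_sum:
  "poly_eval k c p = (\<Sum>q\<in>monomial_exps k. c (fst q) (snd q) * fst p ^ fst q * snd p ^ snd q)"
  unfolding poly_eval_def monomial_exps_Sigma by (subst sum.Sigma) (auto simp: case_prod_beta)

lemma poly_eval_degree_mono:
  assumes "n \<le> k" and "\<And>i j. n < i + j \<Longrightarrow> c i j = 0"
  shows "poly_eval n c p = poly_eval k c p"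
  unfolding poly_eval_eq_sum
  using assms by (intro sum.mono_neutral_left finite_monomial_exps) (auto simp: monomial_exps_def)

lemma curve_le_exists: "1 \<le> k \<Longrightarrow> \<exists>C. curve_le k C"
proof -
  assume "1 \<le> k"
  define c where "c i j = (if i = 1 \<and> j = 0 then 1 else (0::real))" for i j :: nat
  have "poly_deg_exactly 1 c"
    unfolding poly_deg_exactly_def c_def by auto
  then have "curve 1 {p. poly_eval 1 c p = 0}"
    unfolding curve_def by blast
  with \<open>1 \<le> k\<close> show ?thesis
    unfolding curve_le_def by (meson atLeastAtMost_iff order_refl)
qed

lemma curve_le_poly_zero_set:
  assumes "\<And>i j. k < i + j \<Longrightarrow> c i j = 0" and "1 \<le> i0 + j0" and "c i0 j0 \<noteq> 0"
  shows "curve_le k {p. poly_eval k c p = 0}"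
proof -
  define Z where "Z = {i + j | i j. c i j \<noteq> 0}"
  define n where "n = Max Z"
  have "Z \<subseteq> {..k}"
    using assms(1) by (force simp: Z_def not_le[symmetric])
  then have "finite Z"
    by (rule finite_subset) simp
  have "i0 + j0 \<in> Z"
    using assms(3) by (auto simp: Z_def)
  then have "1 \<le> n" "Z \<noteq> {}"
    using assms(2) Max_ge[OF \<open>finite Z\<close>] by (fastforce simp: n_def)+
  then have "n \<in> Z"
    using Max_in[OF \<open>finite Z\<close>] by (simp add: n_def)
  then have "n \<le> k"
    using \<open>Z \<subseteq> {..k}\<close> by auto
  have above_n: "c i j = 0" if "n < i + j" for i j
    using that Max_ge[OF \<open>finite Z\<close>] by (force simp: n_def Z_def)
  have "poly_deg_exactly n c"
    using \<open>n \<in> Z\<close> above_n by (auto simp: poly_deg_exactly_def Z_def)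
  then have "curve n {p. poly_eval n c p = 0}"
    unfolding curve_def by blast
  moreover have "poly_eval n c p = poly_eval k c p" for p
    using \<open>n \<le> k\<close> above_n by (rule poly_eval_degree_mono)
  ultimately show ?thesis
    using \<open>1 \<le> n\<close> \<open>n \<le> k\<close> by (auto simp: curve_le_def)
qed

subsection \<open>Affine independence and dimension\<close>

definition lin_indep_pts :: "(nat \<Rightarrow> vec) \<Rightarrow> nat \<Rightarrow> bool" where
  "lin_indep_pts g m \<longleftrightarrow> (\<forall>c. (\<forall>q. (\<Sum>i\<le>m. c i * g i q) = 0) \<longrightarrow> (\<forall>i\<le>m. c i = 0))"

lemma sum_image_scale_vec_apply:
  assumes "inj_on g A"
  shows "(\<Sum>v\<in>g ` A. scale_vec (u v) v) q = (\<Sum>i\<in>A. u (g i) * g i q)"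
  by (simp add: sum_fun_apply sum.reindex[OF assms])

lemma lin_indep_pts_iff:
  "lin_indep_pts g m \<longleftrightarrow> inj_on g {..m} \<and> Vec.vs1.independent (g ` {..m})"
proof
  assume indep: "lin_indep_pts g m"
  show "inj_on g {..m} \<and> Vec.vs1.independent (g ` {..m})"
  proof
    show inj: "inj_on g {..m}"
    proof (rule inj_onI, rule ccontr)
      fix i j assume "i \<in> {..m}" "j \<in> {..m}" "g i = g j" "i \<noteq> j"
      define c where "c l = (if l = i then 1 else if l = j then -1 else (0::real))" for l
      have "(\<Sum>l\<le>m. c l * g l q) = 0" for q
      proof -
        have "(\<Sum>l\<le>m. c l * g l q)
            = (\<Sum>l\<le>m. if l = i then g i q else 0) - (\<Sum>l\<le>m. if l = j then g j q else 0)"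
          unfolding sum_subtractf[symmetric] using \<open>i \<noteq> j\<close> by (intro sum.cong) (auto simp: c_def)
        also have "\<dots> = 0"
          using \<open>i \<in> {..m}\<close> \<open>j \<in> {..m}\<close> \<open>g i = g j\<close> by simp
        finally show ?thesis .
      qed
      then have "c i = 0"
        using indep \<open>i \<in> {..m}\<close> unfolding lin_indep_pts_def by blast
      then show False
        by (simp add: c_def)
    qed
    show "Vec.vs1.independent (g ` {..m})"
    proof
      assume "Vec.vs1.dependent (g ` {..m})"
      then obtain u v0 where "v0 \<in> g ` {..m}" "u v0 \<noteq> 0"
        and comb: "(\<Sum>v\<in>g ` {..m}. scale_vec (u v) v) = 0"
        by (auto simp: Vec.vs1.dependent_finite)
      have "\<forall>q. (\<Sum>i\<le>m. u (g i) * g i q) = 0"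
        using sum_image_scale_vec_apply[OF inj, of u] comb by simp
      then have "\<forall>i\<le>m. u (g i) = 0"
        using indep unfolding lin_indep_pts_def by (elim allE[of _ "\<lambda>i. u (g i)"]) blast
      with \<open>v0 \<in> g ` {..m}\<close> \<open>u v0 \<noteq> 0\<close> show False by auto
    qed
  qed
next
  assume "inj_on g {..m} \<and> Vec.vs1.independent (g ` {..m})"
  then have inj: "inj_on g {..m}" and indep: "Vec.vs1.independent (g ` {..m})" by auto
  show "lin_indep_pts g m"
    unfolding lin_indep_pts_def
  proof (intro allI impI)
    fix c i assume comb: "\<forall>q. (\<Sum>i\<le>m. c i * g i q) = 0" and "i \<le> m"
    define u where "u v = c (inv_into {..m} g v)" for v
    have "(\<Sum>v\<in>g ` {..m}. scale_vec (u v) v) q = (\<Sum>i\<le>m. c i * g i q)" for q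
      unfolding sum_image_scale_vec_apply[OF inj] u_def
      using inj by (intro sum.cong) (auto simp: inv_into_f_f)
    then have "(\<Sum>v\<in>g ` {..m}. scale_vec (u v) v) = 0"
      using comb by auto
    then have "u (g i) = 0"
      using indep \<open>i \<le> m\<close> by (auto simp: Vec.vs1.dependent_finite)
    with inj \<open>i \<le> m\<close> show "c i = 0"
      by (simp add: u_def inv_into_f_f)
  qed
qed

lemma aff_indep_pts_iff_lin_indep_pts_lift:
  assumes "\<And>i. i \<le> m \<Longrightarrow> f i (0, 0) = 0"
  shows "aff_indep_pts f m \<longleftrightarrow> lin_indep_pts (\<lambda>i. f i + unit_vec (0, 0)) m"
proof -
  have lift: "(\<Sum>i\<le>m. c i * (f i + unit_vec (0, 0)) q)
      = (\<Sum>i\<le>m. c i * f i q) + (\<Sum>i\<le>m. c i) * unit_vec (0, 0) q" for c q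
    by (simp add: distrib_left sum.distrib sum_distrib_right)
  have "(\<forall>q. (\<Sum>i\<le>m. c i * (f i + unit_vec (0, 0)) q) = 0)
      \<longleftrightarrow> (\<Sum>i\<le>m. c i) = 0 \<and> (\<forall>q. (\<Sum>i\<le>m. c i * f i q) = 0)" for c
  proof
    assume lin: "\<forall>q. (\<Sum>i\<le>m. c i * (f i + unit_vec (0, 0)) q) = 0"
    have "(\<Sum>i\<le>m. c i * f i (0, 0)) = 0"
      using assms by simp
    then have "(\<Sum>i\<le>m. c i) = (\<Sum>i\<le>m. c i * (f i + unit_vec (0, 0)) (0, 0))"
      unfolding lift by (simp add: unit_vec_def)
    also have "\<dots> = 0"
      using lin by blast
    finally have "(\<Sum>i\<le>m. c i) = 0" .
    with lin show "(\<Sum>i\<le>m. c i) = 0 \<and> (\<forall>q. (\<Sum>i\<le>m. c i * f i q) = 0)"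
      by (simp add: lift del: plus_fun_apply)
  qed (simp add: lift del: plus_fun_apply)
  then show ?thesis
    by (simp only: aff_indep_pts_def lin_indep_pts_def)
qed

lemma lin_indep_pts_card_le:
  assumes "lin_indep_pts g m" and "\<And>i. i \<le> m \<Longrightarrow> g i \<in> coord_space k"
  shows "m + 1 \<le> card (monomial_exps k)"
proof -
  have inj: "inj_on g {..m}" and indep: "Vec.vs1.independent (g ` {..m})"
    using assms(1) by (simp_all add: lin_indep_pts_iff)
  have "g ` {..m} \<subseteq> Vec.vs1.span (unit_vec ` monomial_exps k)"
    using assms(2) coord_space_subset_span by blast
  then have "card (g ` {..m}) \<le> card (unit_vec ` monomial_exps k)"
    using Vec.vs1.independent_span_bound[OF _ indep] by simp
  then show ?thesis
    by (simp add: card_unit_vecs card_image[OF inj])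
qed

lemma aff_indep_pts_Fl_psi_card_le:
  assumes "\<And>i. i \<le> m \<Longrightarrow> f i \<in> Fl (psi k ` S)" and "aff_indep_pts f m"
  shows "m + 1 \<le> card (monomial_exps k)"
proof (rule lin_indep_pts_card_le)
  show "lin_indep_pts (\<lambda>i. f i + unit_vec (0, 0)) m"
    using assms(2) aff_indep_pts_iff_lin_indep_pts_lift[of m f] Fl_psi_zero_exp[OF assms(1)]
    by simp
  show "f i + unit_vec (0, 0) \<in> coord_space k" if "i \<le> m" for i
    using assms(1)[OF that]
    by (intro add_in_coord_space Fl_psi_in_coord_space unit_vec_in_coord_space) auto
qed

lemma lin_indep_pts_in_spanning_set:
  assumes "X \<subseteq> coord_space k" and "unit_vec ` monomial_exps k \<subseteq> Vec.vs1.span X"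
  obtains g where "\<And>i. i \<le> card (monomial_exps k) - 1 \<Longrightarrow> g i \<in> X"
    and "lin_indep_pts g (card (monomial_exps k) - 1)"
proof -
  let ?N = "card (monomial_exps k)"
  obtain B where B: "B \<subseteq> X" "Vec.vs1.independent B" "X \<subseteq> Vec.vs1.span B"
    using Vec.vs1.maximal_independent_subset[of X] by blast
  have "unit_vec ` monomial_exps k \<subseteq> Vec.vs1.span B"
    using assms(2) Vec.vs1.span_minimal[OF B(3) Vec.vs1.subspace_span] by blast
  moreover have "B \<subseteq> Vec.vs1.span (unit_vec ` monomial_exps k)"
    using B(1) assms(1) coord_space_subset_span by blast
  then have "finite B"
    using Vec.vs1.independent_span_bound[OF finite_imageI[OF finite_monomial_exps] B(2)] by simp
  ultimately have "?N \<le> card B"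
    using Vec.vs1.independent_span_bound[OF \<open>finite B\<close> independent_unit_vecs]
    by (simp add: card_unit_vecs)
  then obtain B' where "B' \<subseteq> B" "card B' = ?N" "finite B'"
    by (rule obtain_subset_with_card_n)
  then obtain h where h: "bij_betw h {0..<?N} B'"
    using ex_bij_betw_nat_finite[of B'] by auto
  have dom: "{..?N - 1} = {0..<?N}"
    using card_monomial_exps_pos[of k] by auto
  show thesis
  proof
    show "h i \<in> X" if "i \<le> ?N - 1" for i
      using that dom bij_betwE[OF h] \<open>B' \<subseteq> B\<close> B(1) by blast
    have "inj_on h {..?N - 1}" "h ` {..?N - 1} = B'"
      using h unfolding dom bij_betw_def by simp_all
    moreover have "Vec.vs1.independent B'"
      using Vec.vs1.independent_mono[OF B(2) \<open>B' \<subseteq> B\<close>] .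
    ultimately show "lin_indep_pts h (?N - 1)"
      by (simp add: lin_indep_pts_iff)
  qed
qed

lemma fl_dim_Fl_psi_ge_if_spanning:
  assumes "unit_vec ` monomial_exps k \<subseteq> Vec.vs1.span (veronese k ` S)"
  shows "int (card (monomial_exps k)) - 1 \<le> fl_dim (Fl (psi k ` S))"
proof -
  let ?N = "card (monomial_exps k)" and ?V = "Fl (psi k ` S)"
  let ?M = "{m. \<exists>f. (\<forall>i\<le>m. f i \<in> ?V) \<and> aff_indep_pts f m}"
  obtain g where g: "\<And>i. i \<le> ?N - 1 \<Longrightarrow> g i \<in> veronese k ` S" and "lin_indep_pts g (?N - 1)"
    using lin_indep_pts_in_spanning_set[OF _ assms] veronese_in_coord_space by blast
  define f where "f i = g i - unit_vec (0, 0)" for i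
  have f_psi: "f i \<in> psi k ` S" if "i \<le> ?N - 1" for i
    using g[OF that] by (auto simp: f_def veronese_def)
  have "(\<lambda>i. f i + unit_vec (0, 0)) = g"
    by (simp add: f_def)
  moreover have "f i (0, 0) = 0" if "i \<le> ?N - 1" for i
    using f_psi[OF that] by auto
  ultimately have "aff_indep_pts f (?N - 1)"
    using \<open>lin_indep_pts g (?N - 1)\<close> aff_indep_pts_iff_lin_indep_pts_lift[of "?N - 1" f]
    by simp
  then have "?N - 1 \<in> ?M"
    using f_psi subset_Fl by blast
  have "?M \<subseteq> {..?N}"
  proof
    fix m assume "m \<in> ?M"
    then obtain f where "\<forall>i\<le>m. f i \<in> ?V" "aff_indep_pts f m"
      by blast
    then have "m + 1 \<le> ?N"
      by (intro aff_indep_pts_Fl_psi_card_le[of m f]) auto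
    then show "m \<in> {..?N}" by simp
  qed
  then have "finite ?M"
    by (rule finite_subset) simp
  then have "?N - 1 \<le> Max ?M"
    using \<open>?N - 1 \<in> ?M\<close> by (rule Max_ge)
  moreover have "?V \<noteq> {}"
    using f_psi[of 0] subset_Fl by blast
  ultimately show ?thesis
    unfolding fl_dim_def using card_monomial_exps_pos[of k] by (simp add: of_nat_diff)
qed

subsection \<open>Curves through preimages of flats\<close>

lemma ex_curve_le_superset_psi_inv_Fl_if_not_spanning:
  assumes "1 \<le> k" and "\<not> unit_vec ` monomial_exps k \<subseteq> Vec.vs1.span (veronese k ` S)"
  shows "\<exists>C. curve_le k C \<and> psi_inv k (Fl (psi k ` S)) \<subseteq> C"
proof (cases "S = {}")
  case True
  then show ?thesis
    using curve_le_exists[OF assms(1)] by (auto simp: psi_inv_def)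
next
  case False
  then obtain s0 where "s0 \<in> S" by blast
  obtain c q0 where c_S: "\<And>x. x \<in> veronese k ` S \<Longrightarrow> (\<Sum>q\<in>monomial_exps k. c q * x q) = 0"
    and "q0 \<in> monomial_exps k" "c q0 \<noteq> 0"
    using annihilator_exists[OF _ assms(2)] veronese_in_coord_space by blast
  have affine: "(\<Sum>q\<in>monomial_exps k. c q * psi k s q) = - c (0, 0)" if "s \<in> S" for s
    using c_S[of "veronese k s"] that by (simp add: sum_veronese)
  have "\<exists>q\<in>monomial_exps k. q \<noteq> (0, 0) \<and> c q \<noteq> 0"
    \<comment> \<open>a nonzero constant polynomial cannot vanish at s0\<close>
  proof (rule ccontr)
    assume "\<not> ?thesis"
    then have "(\<Sum>q\<in>monomial_exps k. c q * psi k s0 q) = 0"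
      by (intro sum.neutral) auto
    with affine[OF \<open>s0 \<in> S\<close>] \<open>\<not> ?thesis\<close> \<open>q0 \<in> monomial_exps k\<close> \<open>c q0 \<noteq> 0\<close>
    show False by (cases "q0 = (0, 0)") auto
  qed
  then obtain i0 j0 where "(i0, j0) \<in> monomial_exps k" "(i0, j0) \<noteq> (0, 0)" "c (i0, j0) \<noteq> 0"
    by (metis surj_pair)
  define poly_coeff where "poly_coeff i j = (if i + j \<le> k then c (i, j) else 0)" for i j
  have "curve_le k {a. poly_eval k poly_coeff a = 0}"
    using \<open>(i0, j0) \<in> monomial_exps k\<close> \<open>(i0, j0) \<noteq> (0, 0)\<close> \<open>c (i0, j0) \<noteq> 0\<close>
    by (intro curve_le_poly_zero_set[of k poly_coeff i0 j0]) (auto simp: poly_coeff_def monomial_exps_def)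
  moreover have "psi_inv k (Fl (psi k ` S)) \<subseteq> {a. poly_eval k poly_coeff a = 0}"
  proof
    fix a assume "a \<in> psi_inv k (Fl (psi k ` S))"
    then have "(\<Sum>q\<in>monomial_exps k. c q * psi k a q) = - c (0, 0)"
      unfolding psi_inv_def using affine by (auto elim!: Fl_linear_equation)
    moreover have "poly_eval k poly_coeff a = (\<Sum>q\<in>monomial_exps k. c q * veronese k a q)"
      unfolding poly_eval_eq_sum
      by (intro sum.cong) (auto simp: poly_coeff_def veronese_apply monomial_exps_def)
    ultimately show "a \<in> {a. poly_eval k poly_coeff a = 0}"
      by (simp add: sum_veronese)
  qed
  ultimately show ?thesis by blast
qed

lemma ex_curve_le_superset_psi_inv_Fl_if_fl_dim_le:
  assumes "1 \<le> k" and "fl_dim (Fl (psi k ` S)) \<le> int ((k + 2) choose 2) - 2"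
  shows "\<exists>C. curve_le k C \<and> psi_inv k (Fl (psi k ` S)) \<subseteq> C"
proof (rule ex_curve_le_superset_psi_inv_Fl_if_not_spanning[OF assms(1)])
  show "\<not> unit_vec ` monomial_exps k \<subseteq> Vec.vs1.span (veronese k ` S)"
    using fl_dim_Fl_psi_ge_if_spanning assms(2) unfolding card_monomial_exps by fastforce
qed

lemma ex_curve_le_superset_psi_inv_Fl_if_card_le:
  assumes "1 \<le> k" and "finite S" and "card S \<le> ((k + 2) choose 2) - 1"
  shows "\<exists>C. curve_le k C \<and> psi_inv k (Fl (psi k ` S)) \<subseteq> C"
proof (rule ex_curve_le_superset_psi_inv_Fl_if_not_spanning[OF assms(1)])
  show "\<not> unit_vec ` monomial_exps k \<subseteq> Vec.vs1.span (veronese k ` S)"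
  proof
    assume "unit_vec ` monomial_exps k \<subseteq> Vec.vs1.span (veronese k ` S)"
    then have "card (unit_vec ` monomial_exps k) \<le> card (veronese k ` S)"
      using Vec.vs1.independent_span_bound[OF _ independent_unit_vecs] assms(2) by simp
    also have "\<dots> \<le> card S"
      using card_image_le[OF assms(2)] .
    finally show False
      using assms(3) card_monomial_exps_pos[of k]
      unfolding card_unit_vecs card_monomial_exps by linarith
  qed
qed

theorem lemma21:
  fixes d e :: nat and B D :: "(real \<times> real) set"
  assumes "0 < d" and "1 \<le> e" and "e \<le> d - 1" and "D \<subseteq> B"
  shows "(alpha_e e D \<ge> 0 \<longrightarrow> (\<exists>C. curve_le e C \<and> psi_inv e (V_e e D) \<subseteq> C))
       \<and> (beta_e d e B D \<ge> -1 \<longrightarrow> (\<exists>C. curve_le (d - e) C \<and> psi_inv (d - e) (W_e d e B D) \<subseteq> C))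
       \<and> (finite B \<and> card B \<le> ((d + 2) choose 2) - 1 \<longrightarrow>
            (\<exists>C. curve_le d C \<and> psi_inv d (V_e d B) \<subseteq> C))
       \<and> (finite B \<and> card B \<le> ((d + 2) choose 2) - 1 \<longrightarrow>
            (\<exists>C1 C2 C3. curve_le e C1 \<and> curve_le (d - e) C2 \<and> curve_le d C3 \<and>
               U_e d e B D \<subseteq> C1 \<union> C2 \<union> C3))"
proof -
  have "1 \<le> d - e" "1 \<le> d"
    using assms by simp_all
  have i: "\<exists>C. curve_le e C \<and> psi_inv e (V_e e D) \<subseteq> C" if "alpha_e e D \<ge> 0"
    using that ex_curve_le_superset_psi_inv_Fl_if_fl_dim_le[OF \<open>1 \<le> e\<close>]
    by (simp add: alpha_e_def V_e_def)
  have ii: "\<exists>C. curve_le (d - e) C \<and> psi_inv (d - e) (W_e d e B D) \<subseteq> C" if "beta_e d e B D \<ge> -1"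
    using that ex_curve_le_superset_psi_inv_Fl_if_fl_dim_le[OF \<open>1 \<le> d - e\<close>]
    by (simp add: beta_e_def W_e_def)
  have iii: "\<exists>C. curve_le d C \<and> psi_inv d (V_e d B) \<subseteq> C"
    if "finite B" "card B \<le> ((d + 2) choose 2) - 1"
    using ex_curve_le_superset_psi_inv_Fl_if_card_le[OF \<open>1 \<le> d\<close> that] by (simp add: V_e_def)
  have iv: "\<exists>C1 C2 C3. curve_le e C1 \<and> curve_le (d - e) C2 \<and> curve_le d C3 \<and>
      U_e d e B D \<subseteq> C1 \<union> C2 \<union> C3" if B: "finite B" "card B \<le> ((d + 2) choose 2) - 1"
  proof -
    obtain C1 where C1: "curve_le e C1" "alpha_e e D \<ge> 0 \<longrightarrow> psi_inv e (V_e e D) \<subseteq> C1"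
      using i curve_le_exists[OF \<open>1 \<le> e\<close>] by (cases "alpha_e e D \<ge> 0") auto
    obtain C2 where C2:
      "curve_le (d - e) C2" "beta_e d e B D \<ge> 0 \<longrightarrow> psi_inv (d - e) (W_e d e B D) \<subseteq> C2"
      using ii curve_le_exists[OF \<open>1 \<le> d - e\<close>] by (cases "beta_e d e B D \<ge> 0") auto
    obtain C3 where C3: "curve_le d C3" "psi_inv d (V_e d B) \<subseteq> C3"
      using iii[OF B] by blast
    have "U_e d e B D \<subseteq> C1 \<union> C2 \<union> C3"
      using C1(2) C2(2) C3(2) by (auto simp: U_e_def)
    with C1(1) C2(1) C3(1) show ?thesis
      by blast
  qed
  show ?thesis
    using i ii iii iv by blast
qed

end
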